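(* Let $A_1,\ldots,A_n$ be events in a probability space, let $X$ be the number of these events that occur, and for $1\le j\le n$ let $S_j=\sum_{1\le i_1<\cdots<i_j\le n}P(A_{i_1}\cdots A_{i_j})$. Let $r,k$ be integers with $1\le r\le k<n$. If $r+k$ is odd, then $$P(X\ge r)\ge\sum_{j=r}^{k}(-1)^{r+j}\binom{j-1}{r-1}S_j+\sum_{i=1}^{r}\binom{k-i}{r-i}\frac{\binom{k+1}{i}}{\binom{n}{i}}S_{k+1},$$ and if $r+k$ is even, then $$P(X\ge r)\le\sum_{j=r}^{k}(-1)^{r+j}\binom{j-1}{r-1}S_j-\sum_{i=1}^{r}\binom{k-i}{r-i}\frac{\binom{k+1}{i}}{\binom{n}{i}}S_{k+1}.$$
   Context: Binomial convention: for integers $s,t$, $\binom{t}{s}=0$ if $\min(s,t)<0$ or $s>t$; otherwise $\binom{t}{s}=\frac{t!}{s!(t-s)!}$. $A_{i_1}\cdots A_{i_j}$ denotes the intersection of the events. *)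

theory Defs
  imports "HOL-Probability.Probability"
begin

definition num_occ :: "(nat \<Rightarrow> 'a set) \<Rightarrow> nat \<Rightarrow> 'a \<Rightarrow> nat" where
  "num_occ A n w = card {i \<in> {1..n}. w \<in> A i}"

definition S_sum :: "'a measure \<Rightarrow> (nat \<Rightarrow> 'a set) \<Rightarrow> nat \<Rightarrow> nat \<Rightarrow> real" where
  "S_sum M A n j = (\<Sum>I\<in>{I. I \<subseteq> {1..n} \<and> card I = j}. measure M (\<Inter>i\<in>I. A i))"

end

(*
  The inequalities hold pointwise in the number m of occurring events: replacing each S_j by
  C(m,j) in the right-hand side gives a bound on the indicator of m >= r, and integrating gives
  the theorem because S_j is the expectation of C(X,j). For r <= m the alternating sum equals
  1 + (-1)^(k-r) R with R = sum_{i=1..r} C(k-i,r-i) C(m-i,k+1-i) >= 0, an identity proved by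
  induction on k via Pascal's rule. Since C(k+1,i) C(m,k+1) = C(m,i) C(m-i,k+1-i) and
  C(m,i) <= C(n,i), the correction term involving S_{k+1} is at most R, so it does not change
  the direction of the inequality.
*)
theory Submission
  imports Defs
begin

(* The remainder R for r = p + 1, k = r + q and m = r + s, indexed by u = r - i; this
   parametrisation avoids truncated subtraction in the inductions. *)
definition bonferroni_remainder :: "nat \<Rightarrow> nat \<Rightarrow> nat \<Rightarrow> nat" where
  "bonferroni_remainder p q s = (\<Sum>u\<le>p. ((q + u) choose u) * ((s + u) choose (q + 1 + u)))"

lemma bonferroni_remainder_Suc_right:
  "bonferroni_remainder p (Suc q) s + bonferroni_remainder p q s
     = ((p + q + 1) choose p) * ((p + 1 + s) choose (p + q + 2))"
proof (induction p)
  case 0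
  show ?case by (simp add: bonferroni_remainder_def)
next
  case (Suc p)
  define a b x y where "a = (p + q + 1) choose p" and "b = (p + q + 1) choose Suc p"
    and "x = (s + p + 1) choose (q + p + 2)" and "y = (s + p + 1) choose Suc (q + p + 2)"
  have "(Suc p + q + 1) choose Suc p = a + b"
    using binomial_Suc_Suc[of "p + q + 1" p] by (simp add: a_def b_def del: binomial_Suc_Suc)
  moreover have "(Suc p + 1 + s) choose (Suc p + q + 2) = x + y"
    using binomial_Suc_Suc[of "s + p + 1" "q + p + 2"]
    by (simp add: x_def y_def add_ac del: binomial_Suc_Suc)
  moreover have "bonferroni_remainder (Suc p) (Suc q) s + bonferroni_remainder (Suc p) q s
      = a * x + (a + b) * y + b * x"
    using Suc.IH binomial_Suc_Suc[of "p + q + 1" p]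
    by (simp add: bonferroni_remainder_def a_def b_def x_def y_def add_ac del: binomial_Suc_Suc)
  ultimately show ?case by (simp add: algebra_simps)
qed

lemma choose_Suc_eq_Suc_sum_choose:
  "(p + 1 + s) choose (p + 1) = Suc (\<Sum>u\<le>p. (s + u) choose (u + 1))"
proof (induction p)
  case (Suc p)
  have "(Suc p + 1 + s) choose (Suc p + 1) = ((p + 1 + s) choose (p + 1)) + ((s + Suc p) choose (Suc p + 1))"
    using binomial_Suc_Suc[of "p + 1 + s" "p + 1"] by (simp add: add_ac del: binomial_Suc_Suc)
  then show ?case unfolding Suc.IH sum.atMost_Suc by simp
qed simp

lemma alternating_sum_choose_eq:
  "(\<Sum>t\<le>q. (-1) ^ t * of_nat ((p + t) choose p) * of_nat ((p + 1 + s) choose (p + 1 + t)))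
     = (1 + (-1) ^ q * of_nat (bonferroni_remainder p q s) :: 'a :: comm_ring_1)"
proof (induction q)
  case 0
  show ?case
    using arg_cong[OF choose_Suc_eq_Suc_sum_choose[of p s], of "of_nat :: nat \<Rightarrow> 'a"]
    by (simp add: bonferroni_remainder_def add_ac)
next
  case (Suc q)
  have "(of_nat (bonferroni_remainder p (Suc q) s) + of_nat (bonferroni_remainder p q s) :: 'a)
      = of_nat ((p + q + 1) choose p) * of_nat ((p + 1 + s) choose (p + q + 2))"
    using arg_cong[OF bonferroni_remainder_Suc_right[of p q s], of "of_nat :: nat \<Rightarrow> 'a"] by simp
  then have "(-1) ^ q * of_nat (bonferroni_remainder p (Suc q) s) + (-1) ^ q * of_nat (bonferroni_remainder p q s)
      = (-1) ^ q * (of_nat ((p + q + 1) choose p) * of_nat ((p + 1 + s) choose (p + q + 2)) :: 'a)"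
    by (simp only: distrib_left[symmetric])
  then show ?case
    using Suc.IH by (simp add: algebra_simps del: binomial_Suc_Suc)
qed

definition bonferroni_sum :: "nat \<Rightarrow> nat \<Rightarrow> (nat \<Rightarrow> real) \<Rightarrow> real" where
  "bonferroni_sum r k S = (\<Sum>j=r..k. (-1) ^ (r + j) * real ((j - 1) choose (r - 1)) * S j)"

definition bonferroni_coeff :: "nat \<Rightarrow> nat \<Rightarrow> nat \<Rightarrow> real" where
  "bonferroni_coeff n r k =
     (\<Sum>i=1..r. real ((k - i) choose (r - i)) * real ((k + 1) choose i) / real (n choose i))"

lemma bonferroni_sum_choose_eq:
  assumes "1 \<le> r" "r \<le> k" "r \<le> m"
  shows "bonferroni_sum r k (\<lambda>j. real (m choose j))
    = 1 + (-1) ^ (k - r) * real (bonferroni_remainder (r - 1) (k - r) (m - r))"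
proof -
  define p q s where "p = r - 1" and "q = k - r" and "s = m - r"
  have r: "r = p + 1" "k = p + 1 + q" "m = p + 1 + s"
    using assms by (simp_all add: p_def q_def s_def)
  have "bonferroni_sum r k (\<lambda>j. real (m choose j))
      = (\<Sum>t\<le>q. (-1) ^ (r + (r + t)) * real ((r + t - 1) choose (r - 1)) * real (m choose (r + t)))"
    unfolding bonferroni_sum_def
    by (rule sum.reindex_bij_witness[where i="\<lambda>t. r + t" and j="\<lambda>j. j - r"]) (use r in auto)
  also have "\<dots> = (\<Sum>t\<le>q. (-1) ^ t * real ((p + t) choose p) * real ((p + 1 + s) choose (p + 1 + t)))"
    by (intro sum.cong refl) (simp add: r power_add del: binomial_Suc_Suc)
  also have "\<dots> = 1 + (-1) ^ q * real (bonferroni_remainder p q s)"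
    by (rule alternating_sum_choose_eq)
  finally show ?thesis
    by (simp only: p_def q_def s_def)
qed

lemma bonferroni_sum_choose_eq_0:
  "m < r \<Longrightarrow> bonferroni_sum r k (\<lambda>j. real (m choose j)) = 0"
  unfolding bonferroni_sum_def by (intro sum.neutral) auto

lemma bonferroni_remainder_eq_sum:
  assumes "1 \<le> r" "r \<le> k" "r \<le> m"
  shows "bonferroni_remainder (r - 1) (k - r) (m - r)
    = (\<Sum>i=1..r. ((k - i) choose (r - i)) * ((m - i) choose (k + 1 - i)))"
  unfolding bonferroni_remainder_def
proof (rule sum.reindex_bij_witness[where i="\<lambda>i. r - i" and j="\<lambda>u. r - u"])
  fix u assume "u \<in> {..r - 1}"
  then have "k - (r - u) = k - r + u" "r - (r - u) = u" "m - (r - u) = m - r + u"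
    "k + 1 - (r - u) = k - r + 1 + u"
    using assms by auto
  then show "((k - (r - u)) choose (r - (r - u))) * ((m - (r - u)) choose (k + 1 - (r - u)))
      = ((k - r + u) choose u) * ((m - r + u) choose (k - r + 1 + u))"
    by (simp only:)
qed (use assms in auto)

lemma choose_mult_div_choose_le:
  assumes "i \<le> k" "k \<le> m" "m \<le> n"
  shows "real (k choose i) * real (m choose k) / real (n choose i) \<le> real ((m - i) choose (k - i))"
proof -
  have n_pos: "0 < real (n choose i)"
    using assms by simp
  have "real (k choose i) * real (m choose k) = real (m choose i) * real ((m - i) choose (k - i))"
    using choose_mult[OF assms(1,2)] by (metis mult.commute of_nat_mult)
  also have "\<dots> \<le> real (n choose i) * real ((m - i) choose (k - i))"
    using binomial_right_mono[OF assms(3)] by (intro mult_right_mono) simp_all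
  finally show ?thesis
    by (simp add: pos_divide_le_eq[OF n_pos] mult.commute)
qed

lemma bonferroni_coeff_mult_choose_le:
  assumes "1 \<le> r" "r \<le> k" "r \<le> m" "m \<le> n"
  shows "bonferroni_coeff n r k * real (m choose (k + 1))
    \<le> real (bonferroni_remainder (r - 1) (k - r) (m - r))"
proof (cases "k < m")
  case True
  have "bonferroni_coeff n r k * real (m choose (k + 1))
      = (\<Sum>i=1..r. real ((k - i) choose (r - i))
           * (real ((k + 1) choose i) * real (m choose (k + 1)) / real (n choose i)))"
    by (simp add: bonferroni_coeff_def sum_distrib_right mult.assoc)
  also have "\<dots> \<le> (\<Sum>i=1..r. real ((k - i) choose (r - i)) * real ((m - i) choose (k + 1 - i)))"
    using True assms
    by (intro sum_mono mult_left_mono choose_mult_div_choose_le) (auto simp del: binomial_Suc_Suc)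
  also have "\<dots> = real (bonferroni_remainder (r - 1) (k - r) (m - r))"
    unfolding bonferroni_remainder_eq_sum[OF assms(1-3)] by simp
  finally show ?thesis .
qed (simp add: binomial_eq_0)

lemma bonferroni_pointwise_lower:
  assumes "1 \<le> r" "r \<le> k" "m \<le> n" "odd (r + k)"
  shows "bonferroni_sum r k (\<lambda>j. real (m choose j)) + bonferroni_coeff n r k * real (m choose (k + 1))
    \<le> of_bool (r \<le> m)"
proof (cases "r \<le> m")
  case True
  have "odd (k - r)"
    using assms by auto
  then show ?thesis
    using bonferroni_sum_choose_eq[OF assms(1,2) True]
      bonferroni_coeff_mult_choose_le[OF assms(1,2) True assms(3)] True by simp
qed (use assms(2) in \<open>simp add: bonferroni_sum_choose_eq_0 binomial_eq_0\<close>)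

lemma bonferroni_pointwise_upper:
  assumes "1 \<le> r" "r \<le> k" "m \<le> n" "even (r + k)"
  shows "of_bool (r \<le> m)
    \<le> bonferroni_sum r k (\<lambda>j. real (m choose j)) - bonferroni_coeff n r k * real (m choose (k + 1))"
proof (cases "r \<le> m")
  case True
  have "even (k - r)"
    using assms by auto
  then show ?thesis
    using bonferroni_sum_choose_eq[OF assms(1,2) True]
      bonferroni_coeff_mult_choose_le[OF assms(1,2) True assms(3)] True by simp
qed (use assms(2) in \<open>simp add: bonferroni_sum_choose_eq_0 binomial_eq_0\<close>)

lemma num_occ_le: "num_occ A n w \<le> n"
proof -
  have "num_occ A n w \<le> card {1..n}"
    unfolding num_occ_def by (rule card_mono) auto
  then show ?thesis
    by simp
qed

lemma sum_indicator_Inter_eq_choose: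
  "(\<Sum>I\<in>{I. I \<subseteq> {1..n} \<and> card I = j}. indicator (\<Inter>i\<in>I. A i) w :: real)
     = real (num_occ A n w choose j)"
proof -
  have "{I. I \<subseteq> {1..n} \<and> card I = j} \<inter> {I. w \<in> (\<Inter>i\<in>I. A i)}
      = {I. I \<subseteq> {i \<in> {1..n}. w \<in> A i} \<and> card I = j}"
    by auto
  moreover have "finite {I. I \<subseteq> {1..n} \<and> card I = j}"
    by (rule finite_subset[of _ "Pow {1..n}"]) auto
  ultimately show ?thesis
    by (simp add: indicator_def num_occ_def n_subsets)
qed

lemma measure_Collect_eq_integral_of_bool:
  "measure M {w \<in> space M. P w} = (\<integral>w. of_bool (P w) \<partial>M)"
proof -
  have "measure M {w \<in> space M. P w} = (\<integral>w. indicator {w \<in> space M. P w} w \<partial>M)"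
    by (simp add: Int_absorb2)
  also have "\<dots> = (\<integral>w. of_bool (P w) \<partial>M)"
    by (intro Bochner_Integration.integral_cong) (auto simp: indicator_def)
  finally show ?thesis .
qed

locale finite_measure_events = finite_measure M for M :: "'a measure" +
  fixes A :: "nat \<Rightarrow> 'a set" and n :: nat
  assumes events: "i \<in> {1..n} \<Longrightarrow> A i \<in> sets M"
begin

lemma measurable_num_occ: "num_occ A n \<in> M \<rightarrow>\<^sub>M count_space UNIV"
  unfolding num_occ_def[abs_def]
proof (rule measurable_card)
  fix i
  show "{w \<in> space M. i \<in> {i \<in> {1..n}. w \<in> A i}} \<in> sets M"
    using events[of i] by (cases "i \<in> {1..n}") (auto simp: Int_def[symmetric] Int_commute)
qed

lemma integrable_num_occ: "integrable M (\<lambda>w. f (num_occ A n w) :: real)"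
proof (rule integrable_const_bound[where B="\<Sum>m\<le>n. \<bar>f m\<bar>"])
  show "AE w in M. norm (f (num_occ A n w)) \<le> (\<Sum>m\<le>n. \<bar>f m\<bar>)"
    using num_occ_le[of A n] by (intro AE_I2) (auto intro!: member_le_sum)
  show "(\<lambda>w. f (num_occ A n w)) \<in> borel_measurable M"
    using measurable_num_occ by measurable
qed

lemma S_sum_eq_integral:
  assumes "1 \<le> j"
  shows "S_sum M A n j = (\<integral>w. real (num_occ A n w choose j) \<partial>M)"
proof -
  let ?II = "{I. I \<subseteq> {1..n} \<and> card I = j}"
  have Inter_sets: "(\<Inter>i\<in>I. A i) \<in> sets M" if "I \<in> ?II" for I
  proof -
    have "I \<noteq> {}" "finite I"
      using that assms by (auto intro: finite_subset)
    then show ?thesis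
      using that events by (intro sets.finite_INT) auto
  qed
  then have "measure M (\<Inter>i\<in>I. A i) = (\<integral>w. indicator (\<Inter>i\<in>I. A i) w \<partial>M)" if "I \<in> ?II" for I
    using that by (simp add: sets.Int_space_eq2)
  then have "S_sum M A n j = (\<Sum>I\<in>?II. \<integral>w. indicator (\<Inter>i\<in>I. A i) w \<partial>M)"
    unfolding S_sum_def by (rule sum.cong[OF refl])
  also have "\<dots> = (\<integral>w. (\<Sum>I\<in>?II. indicator (\<Inter>i\<in>I. A i) w) \<partial>M)"
    using Inter_sets by (intro Bochner_Integration.integral_sum[symmetric] integrable_real_indicator)
      (auto simp: emeasure_eq_measure)
  also have "\<dots> = (\<integral>w. real (num_occ A n w choose j) \<partial>M)"
    by (simp only: sum_indicator_Inter_eq_choose)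
  finally show ?thesis .
qed

lemma bonferroni_sum_S_sum_eq_integral:
  assumes "1 \<le> r"
  shows "bonferroni_sum r k (S_sum M A n)
    = (\<integral>w. bonferroni_sum r k (\<lambda>j. real (num_occ A n w choose j)) \<partial>M)"
proof -
  have "bonferroni_sum r k (S_sum M A n)
      = (\<Sum>j=r..k. \<integral>w. (-1) ^ (r + j) * real ((j - 1) choose (r - 1)) * real (num_occ A n w choose j) \<partial>M)"
    unfolding bonferroni_sum_def using assms
    by (intro sum.cong refl) (auto simp: S_sum_eq_integral)
  also have "\<dots> = (\<integral>w. bonferroni_sum r k (\<lambda>j. real (num_occ A n w choose j)) \<partial>M)"
    unfolding bonferroni_sum_def
    by (rule Bochner_Integration.integral_sum[symmetric]) (rule integrable_num_occ)
  finally show ?thesis .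
qed

lemma integral_bonferroni_sum_add:
  assumes "1 \<le> r"
  shows "(\<integral>w. bonferroni_sum r k (\<lambda>j. real (num_occ A n w choose j))
             + c * real (num_occ A n w choose (k + 1)) \<partial>M)
    = bonferroni_sum r k (S_sum M A n) + c * S_sum M A n (k + 1)"
  using integrable_num_occ[of "\<lambda>m. bonferroni_sum r k (\<lambda>j. real (m choose j))"]
    integrable_num_occ[of "\<lambda>m. real (m choose (k + 1))"]
  by (simp add: bonferroni_sum_S_sum_eq_integral[OF assms] S_sum_eq_integral)

end

theorem theorem3:
  fixes M :: "'a measure" and A :: "nat \<Rightarrow> 'a set" and n r k :: nat
  assumes "prob_space M"
    and "\<And>i. i \<in> {1..n} \<Longrightarrow> A i \<in> sets M"
    and "1 \<le> r" and "r \<le> k" and "k < n"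
  shows "(odd (r + k) \<longrightarrow>
           measure M {w \<in> space M. num_occ A n w \<ge> r} \<ge>
             (\<Sum>j=r..k. (-1) ^ (r + j) * real ((j - 1) choose (r - 1)) * S_sum M A n j)
             + (\<Sum>i=1..r. real ((k - i) choose (r - i)) * real ((k + 1) choose i) / real (n choose i))
               * S_sum M A n (k + 1))
       \<and> (even (r + k) \<longrightarrow>
           measure M {w \<in> space M. num_occ A n w \<ge> r} \<le>
             (\<Sum>j=r..k. (-1) ^ (r + j) * real ((j - 1) choose (r - 1)) * S_sum M A n j)
             - (\<Sum>i=1..r. real ((k - i) choose (r - i)) * real ((k + 1) choose i) / real (n choose i))
               * S_sum M A n (k + 1))"
proof -
  interpret prob_space M
    by (fact assms(1))
  interpret finite_measure_events M A n
    by unfold_locales (fact assms(2))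
  let ?X = "num_occ A n"
  note prob_eq = measure_Collect_eq_integral_of_bool[of M "\<lambda>w. r \<le> ?X w"]
  note integral_eq = integral_bonferroni_sum_add[OF assms(3)]
  have "bonferroni_sum r k (S_sum M A n) + bonferroni_coeff n r k * S_sum M A n (k + 1)
      \<le> measure M {w \<in> space M. r \<le> ?X w}" if "odd (r + k)"
    unfolding prob_eq integral_eq[symmetric]
    using integrable_num_occ bonferroni_pointwise_lower[OF assms(3,4) num_occ_le[of A n] that]
    by (intro integral_mono) auto
  moreover have "measure M {w \<in> space M. r \<le> ?X w}
      \<le> bonferroni_sum r k (S_sum M A n) + (- bonferroni_coeff n r k) * S_sum M A n (k + 1)"
    if "even (r + k)"
    unfolding prob_eq integral_eq[symmetric]
    using integrable_num_occ bonferroni_pointwise_upper[OF assms(3,4) num_occ_le[of A n] that]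
    by (intro integral_mono) auto
  ultimately show ?thesis
    by (simp add: bonferroni_sum_def bonferroni_coeff_def)
qed

end
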